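(* Let $\Sigma$ be a finite alphabet and $L\subseteq\Sigma^*$. Then $L$ is accepted by a 1-way quantum finite automaton with probability bounded away from $1/2$ if and only if the relation $L\times\{0\}\ \cup\ \overline{L}\times\{1\}\subseteq \Sigma^*\times\{0,1\}^*$ (where $\overline{L}=\Sigma^*\setminus L$) is computed by some quantum finite state transducer with an isolated cutpoint.
   Context: A quantum finite state transducer (qfst) is a tuple $T=(Q,\Sigma_1,\Sigma_2,V,f,q_0,Q_{\rm acc},Q_{\rm rej})$ with $Q$ a finite set of states, $\Sigma_1,\Sigma_2$ finite input/output alphabets, $q_0\in Q$, and disjoint sets $Q_{\rm acc},Q_{\rm rej}\subseteq Q$ of accepting and rejecting states; $Q_{\rm non}=Q\setminus(Q_{\rm acc}\cup Q_{\rm rej})$. For each $a\in\Sigma_1\cup\{\ddagger,\$\}$ (end markers $\ddagger,\$\notin\Sigma_1$) there is a unitary $V_a$ on $\ell^2(Q)$, $V_a|q\rangle=\sum_p (V_a)_{qp}|p\rangle$, and an output function $f_a:Q\to\Sigma_2^*$; $V_\$$ maps $\mathrm{span}\,Q_{\rm non}$ into $\mathrm{span}(Q_{\rm acc}\cup Q_{\rm rej})$. On input $v\in\Sigma_1^*$ the machine reads $\ddagger v\$$ symbol by symbol. Its non-halting part is an (unnormalized) vector $\psi=\sum_{q,w}\alpha_{qw}|q\rangle\otimes|w\rangle\in\ell^2(Q\times\Sigma_2^* )$, initially $|q_0\rangle\otimes|\epsilon\rangle$. Reading $a$ maps $\psi$ to $\psi'=\sum_{q,w}\alpha_{qw}V_a|q\rangle\otimes|w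 f_a(q)\rangle$; then for each $x\in\Sigma_2^*$ the squared norm of the component of $\psi'$ on $\mathrm{span}(Q_{\rm acc})\otimes|x\rangle$ is added to the probability of accepting with output $x$, the squared norm of the component of $\psi'$ on $\mathrm{span}(Q_{\rm rej})\otimes\ell^2(\Sigma_2^* )$ is added to the rejection probability, and the computation continues with the projection of $\psi'$ onto $\mathrm{span}(Q_{\rm non})\otimes\ell^2(\Sigma_2^* )$. $T(w|v)$ denotes the total probability of accepting with output $w$ on input $v$. A relation $\mathcal R\subseteq\Sigma_1^*\times\Sigma_2^*$ is computed by $T$ with isolated cutpoint if there are $0<\alpha<1$ and $\varepsilon>0$ such that for all $v,w$: $(v,w)\in\mathcal R\Rightarrow T(w|v)\ge\alpha+\varepsilon$ and $(v,w)\notin\mathcal R\Rightarrow T(w|v)\le\alpha-\varepsilon$. A 1-way quantum finite automaton (in the Kondacs–Watrous measure-many sense) is the same device without output tape and output functions: acceptance/rejection probabilities accumulate from the halting measurement after each symbol of $\ddagger v\$$. It accepts $L$ with probability bounded away from $1/2$ if there is $\delta>0$ such that words in $L$ are accepted with probability $\ge 1/2+\delta$ and words not in $L$ with probability $\le 1/2-\delta$. *)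

theory Defs
  imports Complex_Main
begin

datatype 'a tsym = Sym 'a | LEnd | REnd

definition tape :: "'a list \<Rightarrow> 'a tsym list" where
  "tape v = LEnd # map Sym v @ [REnd]"

datatype bit = Zero | One

(* States are a finite set of natural numbers; V a q p is the matrix entry (V_a)_{qp},
   so that V_a |q> = sum_p (V_a)_{qp} |p>. *)
record ('a, 'b) qfst =
  st   :: "nat set"
  V    :: "'a tsym \<Rightarrow> nat \<Rightarrow> nat \<Rightarrow> complex"
  outf :: "'a tsym \<Rightarrow> nat \<Rightarrow> 'b list"
  q0   :: nat
  acc  :: "nat set"
  rej  :: "nat set"

record 'a qfa =
  qst   :: "nat set"
  qV    :: "'a tsym \<Rightarrow> nat \<Rightarrow> nat \<Rightarrow> complex"
  qq0   :: nat
  qacc  :: "nat set"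
  qrej  :: "nat set"

definition unitary_on :: "nat set \<Rightarrow> (nat \<Rightarrow> nat \<Rightarrow> complex) \<Rightarrow> bool" where
  "unitary_on Q U \<longleftrightarrow>
     (\<forall>q\<in>Q. \<forall>q'\<in>Q. (\<Sum>p\<in>Q. U q p * cnj (U q' p)) = (if q = q' then 1 else 0))"

definition qfst_wf :: "('a, 'b) qfst \<Rightarrow> bool" where
  "qfst_wf T \<longleftrightarrow> finite (st T) \<and> q0 T \<in> st T \<and> acc T \<subseteq> st T \<and> rej T \<subseteq> st T
     \<and> acc T \<inter> rej T = {}
     \<and> (\<forall>a. unitary_on (st T) (V T a))
     \<and> (\<forall>q\<in>st T - (acc T \<union> rej T). \<forall>p\<in>st T - (acc T \<union> rej T). V T REnd q p = 0)"

definition qfa_wf :: "'a qfa \<Rightarrow> bool" where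
  "qfa_wf M \<longleftrightarrow> finite (qst M) \<and> qq0 M \<in> qst M \<and> qacc M \<subseteq> qst M \<and> qrej M \<subseteq> qst M
     \<and> qacc M \<inter> qrej M = {}
     \<and> (\<forall>a. unitary_on (qst M) (qV M a))
     \<and> (\<forall>q\<in>qst M - (qacc M \<union> qrej M). \<forall>p\<in>qst M - (qacc M \<union> qrej M). qV M REnd q p = 0)"

(* ----- QFST semantics.  The (non-halting) state psi is a finitely supported function
   psi q w = alpha_{q w} on Q x Sigma_2^*. ----- *)

(* psi' = sum over q,w of alpha_qw V_a|q> tensor |w f_a q>, i.e.
   psi' p x = sum over q in Q with x = w @ f_a q of alpha_qw times (V_a)_qp *)
definition qfst_evolve ::
  "('a, 'b) qfst \<Rightarrow> 'a tsym \<Rightarrow> (nat \<Rightarrow> 'b list \<Rightarrow> complex) \<Rightarrow> nat \<Rightarrow> 'b list \<Rightarrow> complex" where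
  "qfst_evolve T a psi p x =
     (\<Sum>q\<in>st T. if length (outf T a q) \<le> length x
                   \<and> drop (length x - length (outf T a q)) x = outf T a q
                 then psi q (take (length x - length (outf T a q)) x) * V T a q p else 0)"

definition qfst_proj_non ::
  "('a, 'b) qfst \<Rightarrow> (nat \<Rightarrow> 'b list \<Rightarrow> complex) \<Rightarrow> nat \<Rightarrow> 'b list \<Rightarrow> complex" where
  "qfst_proj_non T psi p x = (if p \<in> st T - (acc T \<union> rej T) then psi p x else 0)"

fun qfst_acc_run ::
  "('a, 'b) qfst \<Rightarrow> (nat \<Rightarrow> 'b list \<Rightarrow> complex) \<Rightarrow> 'a tsym list \<Rightarrow> 'b list \<Rightarrow> real" where
  "qfst_acc_run T psi [] w = 0"
| "qfst_acc_run T psi (a # as) w =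
     (let psi' = qfst_evolve T a psi
      in (\<Sum>p\<in>acc T. (cmod (psi' p w))\<^sup>2) + qfst_acc_run T (qfst_proj_non T psi') as w)"

definition qfst_prob :: "('a, 'b) qfst \<Rightarrow> 'b list \<Rightarrow> 'a list \<Rightarrow> real" where
  "qfst_prob T w v =
     qfst_acc_run T (\<lambda>q x. if q = q0 T \<and> x = [] then 1 else 0) (tape v) w"

definition computes_isolated :: "('a, 'b) qfst \<Rightarrow> ('a list \<times> 'b list) set \<Rightarrow> bool" where
  "computes_isolated T R \<longleftrightarrow>
     (\<exists>\<alpha> \<epsilon>::real. 0 < \<alpha> \<and> \<alpha> < 1 \<and> \<epsilon> > 0 \<and>
        (\<forall>v w. ((v, w) \<in> R \<longrightarrow> qfst_prob T w v \<ge> \<alpha> + \<epsilon>) \<and>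
               ((v, w) \<notin> R \<longrightarrow> qfst_prob T w v \<le> \<alpha> - \<epsilon>)))"

definition qfa_evolve :: "'a qfa \<Rightarrow> 'a tsym \<Rightarrow> (nat \<Rightarrow> complex) \<Rightarrow> nat \<Rightarrow> complex" where
  "qfa_evolve M a psi p = (\<Sum>q\<in>qst M. psi q * qV M a q p)"

definition qfa_proj_non :: "'a qfa \<Rightarrow> (nat \<Rightarrow> complex) \<Rightarrow> nat \<Rightarrow> complex" where
  "qfa_proj_non M psi p = (if p \<in> qst M - (qacc M \<union> qrej M) then psi p else 0)"

fun qfa_acc_run :: "'a qfa \<Rightarrow> (nat \<Rightarrow> complex) \<Rightarrow> 'a tsym list \<Rightarrow> real" where
  "qfa_acc_run M psi [] = 0"
| "qfa_acc_run M psi (a # as) =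
     (let psi' = qfa_evolve M a psi
      in (\<Sum>p\<in>qacc M. (cmod (psi' p))\<^sup>2) + qfa_acc_run M (qfa_proj_non M psi') as)"

definition qfa_prob :: "'a qfa \<Rightarrow> 'a list \<Rightarrow> real" where
  "qfa_prob M v = qfa_acc_run M (\<lambda>q. if q = qq0 M then 1 else 0) (tape v)"

definition qfa_accepts_bounded :: "'a qfa \<Rightarrow> 'a list set \<Rightarrow> bool" where
  "qfa_accepts_bounded M L \<longleftrightarrow>
     (\<exists>\<delta>::real. \<delta> > 0 \<and>
        (\<forall>v. (v \<in> L \<longrightarrow> qfa_prob M v \<ge> 1/2 + \<delta>) \<and>
             (v \<notin> L \<longrightarrow> qfa_prob M v \<le> 1/2 - \<delta>)))"

definition char_rel :: "'a list set \<Rightarrow> ('a list \<times> bit list) set" where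
  "char_rel L = {(v, [Zero]) | v. v \<in> L} \<union> {(v, [One]) | v. v \<notin> L}"

end

theory Submission
  imports Defs
begin

(* Both directions are simulations on product state spaces Q x {..<k}, whose second component we
   call the track.  From a QFA M accepting L with probability p(v), a transducer runs two copies of
   M with amplitude 1/sqrt 2 each; the copy with bit b writes b when M halts and accepts iff M
   halted accepting (b = 0) resp. rejecting (b = 1).  So T(0|v) = p(v)/2, T(1|v) = (1 - p(v))/2 and
   all other outputs have probability 0, and 1/4 is an isolated cutpoint.  Conversely, a QFA keeps
   the state of a transducer T and records on the track the output of T as long as it has length at
   most 1; accepting in the accepting states of T with recorded output 0 gives probability
   T(0|v).  Splitting off amplitude d to an extra accepting or rejecting track on the left end
   marker turns this into c^2 T(0|v) + [z] d^2, which moves the cutpoint of T to 1/2. *)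

section \<open>Unitary matrices\<close>

lemma unitary_on_row_norm:
  assumes "unitary_on Q U" "q \<in> Q"
  shows "(\<Sum>p\<in>Q. (cmod (U q p))\<^sup>2) = 1"
proof -
  have "complex_of_real (\<Sum>p\<in>Q. (cmod (U q p))\<^sup>2) = (\<Sum>p\<in>Q. U q p * cnj (U q p))"
    by (simp only: of_real_sum complex_norm_square)
  also have "\<dots> = 1"
    using assms unfolding unitary_on_def by auto
  finally show ?thesis
    by (metis of_real_eq_1_iff)
qed

lemma unitary_on_preserves_norm:
  assumes "unitary_on Q U" "finite Q"
  shows "(\<Sum>p\<in>Q. (cmod (\<Sum>q\<in>Q. \<psi> q * U q p))\<^sup>2) = (\<Sum>q\<in>Q. (cmod (\<psi> q))\<^sup>2)"
proof -
  have "complex_of_real (\<Sum>p\<in>Q. (cmod (\<Sum>q\<in>Q. \<psi> q * U q p))\<^sup>2)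
      = (\<Sum>p\<in>Q. \<Sum>q\<in>Q. \<Sum>q'\<in>Q. \<psi> q * cnj (\<psi> q') * (U q p * cnj (U q' p)))"
    by (simp only: of_real_sum complex_norm_square) (simp add: sum_product mult_ac)
  also have "\<dots> = (\<Sum>q\<in>Q. \<Sum>q'\<in>Q. \<Sum>p\<in>Q. \<psi> q * cnj (\<psi> q') * (U q p * cnj (U q' p)))"
    by (subst sum.swap) (intro sum.cong refl sum.swap)
  also have "\<dots> = (\<Sum>q\<in>Q. \<Sum>q'\<in>Q. \<psi> q * cnj (\<psi> q') * (if q = q' then 1 else 0))"
    using assms(1) unfolding unitary_on_def by (intro sum.cong) (auto simp: sum_distrib_left[symmetric])
  also have "\<dots> = (\<Sum>q\<in>Q. \<psi> q * cnj (\<psi> q))"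
    using assms(2) by (simp add: if_distrib cong: if_cong)
  also have "\<dots> = complex_of_real (\<Sum>q\<in>Q. (cmod (\<psi> q))\<^sup>2)"
    by (simp only: of_real_sum complex_norm_square)
  finally show ?thesis
    using of_real_eq_iff by blast
qed

definition id_matrix :: "nat \<Rightarrow> nat \<Rightarrow> complex" where
  "id_matrix t s = (if t = s then 1 else 0)"

lemma unitary_on_id_matrix:
  assumes "finite K"
  shows "unitary_on K id_matrix"
  unfolding unitary_on_def
proof (intro ballI)
  fix t t' assume "t \<in> K"
  have "(\<Sum>s\<in>K. id_matrix t s * cnj (id_matrix t' s)) = (\<Sum>s\<in>K. if s = t then (if t = t' then 1 else 0) else 0)"
    by (intro sum.cong) (auto simp: id_matrix_def)
  then show "(\<Sum>s\<in>K. id_matrix t s * cnj (id_matrix t' s)) = (if t = t' then 1 else 0)"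
    using assms \<open>t \<in> K\<close> by simp
qed

lemma unitary_on_permute_rows:
  assumes "unitary_on K U" "\<sigma> ` K \<subseteq> K" "inj_on \<sigma> K"
  shows "unitary_on K (\<lambda>t. U (\<sigma> t))"
  using assms unfolding unitary_on_def inj_on_def by (metis image_subset_iff)

definition reflection :: "real \<Rightarrow> real \<Rightarrow> nat \<Rightarrow> nat \<Rightarrow> nat \<Rightarrow> nat \<Rightarrow> complex" where
  "reflection c d i j t s =
     (if t = i then (if s = i then c else if s = j then d else 0)
      else if t = j then (if s = i then d else if s = j then - c else 0)
      else id_matrix t s)"

lemma unitary_on_reflection:
  assumes cd: "c\<^sup>2 + d\<^sup>2 = 1" and K: "finite K" "i \<in> K" "j \<in> K" "i \<noteq> j"
  shows "unitary_on K (reflection c d i j)"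
  unfolding unitary_on_def
proof (intro ballI)
  fix t t' assume "t \<in> K" "t' \<in> K"
  let ?R = "reflection c d i j"
  have cd': "complex_of_real c * c + complex_of_real d * d = 1"
    using cd by (metis of_real_1 of_real_add of_real_mult power2_eq_square)
  have entry: "?R t s * cnj (?R t' s) =
      (if s = i then ?R t i * cnj (?R t' i) else 0) + (if s = j then ?R t j * cnj (?R t' j) else 0)
      + (if s = t then (if t = t' \<and> t \<noteq> i \<and> t \<noteq> j then 1 else 0) else 0)" for s
    using K by (auto simp: reflection_def id_matrix_def)
  have "(\<Sum>s\<in>K. ?R t s * cnj (?R t' s)) =
      ?R t i * cnj (?R t' i) + ?R t j * cnj (?R t' j) + (if t = t' \<and> t \<noteq> i \<and> t \<noteq> j then 1 else 0)"
    unfolding sum.cong[OF refl entry] using K \<open>t \<in> K\<close> by (simp add: sum.distrib)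
  also have "\<dots> = (if t = t' then 1 else 0)"
    using K cd' by (auto simp: reflection_def id_matrix_def algebra_simps)
  finally show "(\<Sum>s\<in>K. ?R t s * cnj (?R t' s)) = (if t = t' then 1 else 0)" .
qed

section \<open>State spaces with tracks\<close>

(* State q on track t < k is the number k * q + t. *)

lemma div_set_eq_image:
  assumes "(k::nat) > 0"
  shows "{n. n div k \<in> Q} = (\<lambda>(q, t). k * q + t) ` (Q \<times> {..<k})"
proof (intro set_eqI iffI)
  fix n assume "n \<in> {n. n div k \<in> Q}"
  then show "n \<in> (\<lambda>(q, t). k * q + t) ` (Q \<times> {..<k})"
    using assms by (auto intro!: image_eqI[where x = "(n div k, n mod k)"])
qed (use assms in auto)

lemma inj_on_track_index:
  assumes "(k::nat) > 0"
  shows "inj_on (\<lambda>(q, t). k * q + t) (Q \<times> {..<k})"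
proof (rule inj_onI, clarsimp)
  fix q t q' t' assume "t < k" "t' < k" "k * q + t = k * q' + t'"
  then have "(k * q + t) div k = (k * q' + t') div k" "(k * q + t) mod k = (k * q' + t') mod k"
    by simp_all
  then show "q = q' \<and> t = t'"
    using assms \<open>t < k\<close> \<open>t' < k\<close> by simp
qed

lemma finite_div_set: "(k::nat) > 0 \<Longrightarrow> finite Q \<Longrightarrow> finite {n. n div k \<in> Q}"
  by (simp add: div_set_eq_image)

lemma sum_div_set:
  assumes "(k::nat) > 0" "finite Q"
  shows "(\<Sum>n | n div k \<in> Q. g n) = (\<Sum>q\<in>Q. \<Sum>t<k. g (k * q + t))"
  unfolding div_set_eq_image[OF assms(1)] sum.reindex[OF inj_on_track_index[OF assms(1)]]
  by (simp add: sum.cartesian_product case_prod_beta)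

lemma sum_div_subset:
  assumes "(k::nat) > 0" "finite Q" "S \<subseteq> {n. n div k \<in> Q}"
  shows "(\<Sum>n\<in>S. F n) = (\<Sum>q\<in>Q. \<Sum>t<k. if k * q + t \<in> S then F (k * q + t) else 0)"
proof -
  have "(\<Sum>n\<in>S. F n) = (\<Sum>n | n div k \<in> Q. if n \<in> S then F n else 0)"
    using sum.inter_restrict[OF finite_div_set[OF assms(1,2)], of F S] assms(3) by (simp add: Int_absorb1)
  then show ?thesis
    by (simp add: sum_div_set[OF assms(1,2)])
qed

(* First the coin C q acts on the track, controlled by the state, then U g acts on the state,
   controlled by the new track g. *)

lemma unitary_on_track_product:
  assumes k: "(k::nat) > 0" and fin: "finite Q"
    and U: "\<And>g. g < k \<Longrightarrow> unitary_on Q (U g)"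
    and C: "\<And>q. q \<in> Q \<Longrightarrow> unitary_on {..<k} (C q)"
  shows "unitary_on {n. n div k \<in> Q}
           (\<lambda>n m. C (n div k) (n mod k) (m mod k) * U (m mod k) (n div k) (m div k))"
  unfolding unitary_on_def
proof (intro ballI)
  fix n n' assume "n \<in> {n. n div k \<in> Q}" "n' \<in> {n. n div k \<in> Q}"
  define q f q' f' where "q = n div k" "f = n mod k" "q' = n' div k" "f' = n' mod k"
  have q: "q \<in> Q" "q' \<in> Q" and f: "f < k" "f' < k"
    using \<open>n \<in> _\<close> \<open>n' \<in> _\<close> k by (auto simp: q_f_q'_f'_def)
  have "(\<Sum>m | m div k \<in> Q. C q f (m mod k) * U (m mod k) q (m div k) *
            cnj (C q' f' (m mod k) * U (m mod k) q' (m div k)))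
      = (\<Sum>p\<in>Q. \<Sum>g<k. C q f g * U g q p * cnj (C q' f' g * U g q' p))"
    using k by (simp add: sum_div_set[OF k fin])
  also have "\<dots> = (\<Sum>g<k. C q f g * cnj (C q' f' g) * (\<Sum>p\<in>Q. U g q p * cnj (U g q' p)))"
    by (subst sum.swap) (simp add: sum_distrib_left mult_ac)
  also have "\<dots> = (\<Sum>g<k. C q f g * cnj (C q' f' g) * (if q = q' then 1 else 0))"
    using U q unfolding unitary_on_def by (intro sum.cong) auto
  also have "\<dots> = (if q = q' then \<Sum>g<k. C q f g * cnj (C q f' g) else 0)"
    by simp
  also have "\<dots> = (if q = q' \<and> f = f' then 1 else 0)"
    using C[OF q(1)] f unfolding unitary_on_def by auto
  also have "\<dots> = (if n = n' then 1 else 0)"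
    by (metis q_f_q'_f'_def div_mult_mod_eq)
  finally show "(\<Sum>m\<in>{n. n div k \<in> Q}. C (n div k) (n mod k) (m mod k) * U (m mod k) (n div k) (m div k) *
      cnj (C (n' div k) (n' mod k) (m mod k) * U (m mod k) (n' div k) (m div k))) = (if n = n' then 1 else 0)"
    by (simp add: q_f_q'_f'_def)
qed

section \<open>Halting probabilities of a QFA\<close>

definition qfa_live :: "'a qfa \<Rightarrow> nat set" where
  "qfa_live M = qst M - (qacc M \<union> qrej M)"

lemma qfa_proj_non_eq: "qfa_proj_non M \<psi> p = (if p \<in> qfa_live M then \<psi> p else 0)"
  by (simp add: qfa_proj_non_def qfa_live_def)

lemma qfa_halting_not_live: "qfa_wf M \<Longrightarrow> p \<in> qacc M \<union> qrej M \<Longrightarrow> p \<in> qst M - qfa_live M"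
  by (auto simp: qfa_wf_def qfa_live_def)

fun qfa_halt_run :: "'a qfa \<Rightarrow> nat set \<Rightarrow> (nat \<Rightarrow> complex) \<Rightarrow> 'a tsym list \<Rightarrow> real" where
  "qfa_halt_run M S \<psi> [] = 0"
| "qfa_halt_run M S \<psi> (a # as) =
     (let \<phi> = qfa_evolve M a \<psi> in (\<Sum>p\<in>S. (cmod (\<phi> p))\<^sup>2) + qfa_halt_run M S (qfa_proj_non M \<phi>) as)"

lemma qfa_acc_run_eq_halt_run: "qfa_acc_run M \<psi> as = qfa_halt_run M (qacc M) \<psi> as"
  by (induction as arbitrary: \<psi>) (simp_all add: Let_def)

lemma qfa_halt_run_nonneg: "0 \<le> qfa_halt_run M S \<psi> as"
  by (induction as arbitrary: \<psi>) (simp_all add: Let_def sum_nonneg)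

lemma qfa_step_norm:
  assumes wf: "qfa_wf M"
  shows "(\<Sum>q\<in>qst M. (cmod (\<psi> q))\<^sup>2) =
           (\<Sum>p\<in>qacc M. (cmod (qfa_evolve M a \<psi> p))\<^sup>2) + (\<Sum>p\<in>qrej M. (cmod (qfa_evolve M a \<psi> p))\<^sup>2)
           + (\<Sum>p\<in>qst M. (cmod (qfa_proj_non M (qfa_evolve M a \<psi>) p))\<^sup>2)"
proof -
  have fin: "finite (qst M)" and A: "qacc M \<subseteq> qst M" and R: "qrej M \<subseteq> qst M"
    and D: "qacc M \<inter> qrej M = {}" and U: "unitary_on (qst M) (qV M a)"
    using wf by (auto simp: qfa_wf_def)
  define \<phi> where "\<phi> = qfa_evolve M a \<psi>"
  have "(\<Sum>q\<in>qst M. (cmod (\<psi> q))\<^sup>2) = (\<Sum>p\<in>qst M. (cmod (\<phi> p))\<^sup>2)"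
    using unitary_on_preserves_norm[OF U fin] by (simp add: \<phi>_def qfa_evolve_def)
  also have "\<dots> = (\<Sum>p\<in>qst M. (if p \<in> qacc M then (cmod (\<phi> p))\<^sup>2 else 0)
      + (if p \<in> qrej M then (cmod (\<phi> p))\<^sup>2 else 0) + (cmod (qfa_proj_non M \<phi> p))\<^sup>2)"
    using D by (intro sum.cong) (auto simp: qfa_proj_non_def)
  also have "\<dots> = (\<Sum>p\<in>qacc M. (cmod (\<phi> p))\<^sup>2) + (\<Sum>p\<in>qrej M. (cmod (\<phi> p))\<^sup>2)
      + (\<Sum>p\<in>qst M. (cmod (qfa_proj_non M \<phi> p))\<^sup>2)"
    by (simp add: sum.distrib sum.inter_restrict[OF fin, symmetric] Int_absorb1 A R)
  finally show ?thesis
    by (simp add: \<phi>_def)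
qed

lemma qfa_end_marker_halts:
  assumes wf: "qfa_wf M"
  shows "qfa_proj_non M (qfa_evolve M REnd (qfa_proj_non M \<phi>)) p = 0"
proof -
  have "(\<Sum>q\<in>qst M. qfa_proj_non M \<phi> q * qV M REnd q p) = 0" if "p \<in> qfa_live M"
    using wf that by (intro sum.neutral) (auto simp: qfa_wf_def qfa_proj_non_eq qfa_live_def)
  then show ?thesis
    by (simp add: qfa_proj_non_eq[of M "qfa_evolve M REnd _"] qfa_evolve_def)
qed

lemma qfa_halt_run_total:
  assumes wf: "qfa_wf M"
  shows "qfa_halt_run M (qacc M) \<psi> (a # as @ [REnd]) + qfa_halt_run M (qrej M) \<psi> (a # as @ [REnd])
           = (\<Sum>q\<in>qst M. (cmod (\<psi> q))\<^sup>2)"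
proof (induction as arbitrary: a \<psi>)
  case Nil
  let ?\<chi> = "qfa_proj_non M (qfa_evolve M a \<psi>)"
  show ?case
    using qfa_step_norm[OF wf, of \<psi> a] qfa_step_norm[OF wf, of ?\<chi> REnd] qfa_end_marker_halts[OF wf]
    by (simp add: Let_def)
next
  case (Cons b as)
  show ?case
    using qfa_step_norm[OF wf, of \<psi> a] Cons.IH[where a = b and \<psi> = "qfa_proj_non M (qfa_evolve M a \<psi>)"]
    by (simp add: Let_def)
qed

lemma qfa_reject_prob:
  assumes wf: "qfa_wf M"
  shows "qfa_halt_run M (qrej M) (\<lambda>q. if q = qq0 M then 1 else 0) (tape v) = 1 - qfa_prob M v"
proof -
  have "(\<Sum>q\<in>qst M. (cmod (if q = qq0 M then 1 else (0::complex)))\<^sup>2) = (\<Sum>q\<in>qst M. if q = qq0 M then 1 else 0)"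
    by (intro sum.cong) auto
  also have "\<dots> = 1"
    using wf by (simp add: qfa_wf_def)
  finally have "(\<Sum>q\<in>qst M. (cmod (if q = qq0 M then 1 else (0::complex)))\<^sup>2) = 1" .
  with qfa_halt_run_total[OF wf, of "\<lambda>q. if q = qq0 M then 1 else 0" LEnd "map Sym v"] show ?thesis
    unfolding qfa_prob_def qfa_acc_run_eq_halt_run tape_def by (simp del: qfa_halt_run.simps)
qed

lemma qfa_prob_bounds:
  assumes "qfa_wf M"
  shows "0 \<le> qfa_prob M v" "qfa_prob M v \<le> 1"
proof -
  let ?\<psi> = "\<lambda>q. if q = qq0 M then 1 else 0"
  show "0 \<le> qfa_prob M v" "qfa_prob M v \<le> 1"
    using qfa_reject_prob[OF assms, of v] qfa_halt_run_nonneg[of M "qacc M" ?\<psi> "tape v"]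
      qfa_halt_run_nonneg[of M "qrej M" ?\<psi> "tape v"]
    by (simp_all add: qfa_prob_def qfa_acc_run_eq_halt_run)
qed

lemma suffix_with_Nil_prefix_iff:
  "(length u \<le> length w \<and> drop (length w - length u) w = u \<and> take (length w - length u) w = []) \<longleftrightarrow> w = u"
  by fastforce

lemma qfst_evolve_Nil_supported:
  assumes "\<And>q y. q \<in> st T \<Longrightarrow> y \<noteq> [] \<Longrightarrow> \<psi> q y = 0"
  shows "qfst_evolve T a \<psi> p x = (\<Sum>q\<in>st T. if x = outf T a q then \<psi> q [] * V T a q p else 0)"
  unfolding qfst_evolve_def
proof (intro sum.cong refl)
  fix q assume "q \<in> st T"
  let ?u = "outf T a q"
  show "(if length ?u \<le> length x \<and> drop (length x - length ?u) x = ?u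
      then \<psi> q (take (length x - length ?u) x) * V T a q p else 0) = (if x = ?u then \<psi> q [] * V T a q p else 0)"
  proof (cases "x = ?u")
    case False
    then have "length ?u \<le> length x \<and> drop (length x - length ?u) x = ?u \<Longrightarrow> \<psi> q (take (length x - length ?u) x) = 0"
      using suffix_with_Nil_prefix_iff[of ?u x] assms \<open>q \<in> st T\<close> by blast
    then show ?thesis
      using False by (metis mult_zero_left)
  qed simp
qed

lemma qfst_evolve_point_mass:
  assumes "finite (st T)" "r \<in> st T"
  shows "qfst_evolve T a (\<lambda>q x. if q = r \<and> x = [] then 1 else 0) p x = (if x = outf T a r then V T a r p else 0)"
proof -
  have "qfst_evolve T a (\<lambda>q x. if q = r \<and> x = [] then 1 else 0) p x =
      (\<Sum>q\<in>st T. if q = r then (if x = outf T a r then V T a r p else 0) else 0)"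
    by (subst qfst_evolve_Nil_supported) (simp, intro sum.cong refl, auto)
  then show ?thesis
    using assms by simp
qed

lemma qfa_evolve_point_mass:
  assumes "finite (qst M)" "r \<in> qst M"
  shows "qfa_evolve M a (\<lambda>q. if q = r then 1 else 0) p = qV M a r p"
proof -
  have "qfa_evolve M a (\<lambda>q. if q = r then 1 else 0) p = (\<Sum>q\<in>qst M. if q = r then qV M a r p else 0)"
    unfolding qfa_evolve_def by (intro sum.cong) auto
  then show ?thesis
    using assms by simp
qed

section \<open>From a QFA to a transducer\<close>

definition bit_of_nat :: "nat \<Rightarrow> bit" where
  "bit_of_nat b = (if b = 0 then Zero else One)"

(* Track f = 3 b + phase of the transducer carries a copy of M that reports with the bit b; the
   Hadamard coin on the left end marker gives both copies amplitude 1/sqrt 2.  A copy runs in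
   phase 0.  Since T writes its output from the state before a step, it learns only on the next
   symbol that M has halted in q: it then writes b and moves to phase 1, where it halts and accepts
   iff q is accepting (b = 0) resp. rejecting (b = 1).  On the right end marker a running copy moves
   to phase 1 before the end marker of M is applied, and a copy that halted on the previous symbol
   moves to phase 2.  The other values of the track maps only make them permutations. *)

definition sym_track :: "'a qfa \<Rightarrow> nat \<Rightarrow> nat \<Rightarrow> nat" where
  "sym_track M q f = (if q \<in> qfa_live M then f else 3 * (f div 3) + [1, 0, 2] ! (f mod 3))"

definition end_track :: "'a qfa \<Rightarrow> nat \<Rightarrow> nat \<Rightarrow> nat" where
  "end_track M q f = 3 * (f div 3) + (if q \<in> qfa_live M then [1, 2, 0] else [2, 1, 0]) ! (f mod 3)"

definition qfst_coin :: "'a qfa \<Rightarrow> 'a tsym \<Rightarrow> nat \<Rightarrow> nat \<Rightarrow> nat \<Rightarrow> complex" where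
  "qfst_coin M a q f = (case a of
       LEnd \<Rightarrow> reflection (1 / sqrt 2) (1 / sqrt 2) 0 3 f
     | Sym _ \<Rightarrow> id_matrix (sym_track M q f)
     | REnd \<Rightarrow> id_matrix (end_track M q f))"

definition qfst_state_matrix :: "'a qfa \<Rightarrow> 'a tsym \<Rightarrow> nat \<Rightarrow> nat \<Rightarrow> nat \<Rightarrow> complex" where
  "qfst_state_matrix M a g = (if g mod 3 = (if a = REnd then 1 else 0) then qV M a else id_matrix)"

definition qfst_out :: "'a qfa \<Rightarrow> 'a tsym \<Rightarrow> nat \<Rightarrow> bit list" where
  "qfst_out M a n = (case a of
       LEnd \<Rightarrow> []
     | Sym _ \<Rightarrow> if n mod 6 mod 3 = 0 \<and> n div 6 \<notin> qfa_live M then [bit_of_nat (n mod 6 div 3)] else []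
     | REnd \<Rightarrow> if n mod 6 mod 3 = 0 then [bit_of_nat (n mod 6 div 3)] else [])"

definition qfst_acc :: "'a qfa \<Rightarrow> nat set" where
  "qfst_acc M = {n. n div 6 \<in> qacc M \<and> n mod 6 \<in> {1, 2}} \<union> {n. n div 6 \<in> qrej M \<and> n mod 6 \<in> {4, 5}}"

definition qfst_of_qfa :: "'a qfa \<Rightarrow> ('a, bit) qfst" where
  "qfst_of_qfa M = \<lparr>st = {n. n div 6 \<in> qst M},
     V = (\<lambda>a n m. qfst_coin M a (n div 6) (n mod 6) (m mod 6) * qfst_state_matrix M a (m mod 6) (n div 6) (m div 6)),
     outf = qfst_out M, q0 = 6 * qq0 M,
     acc = qfst_acc M, rej = {n. n div 6 \<in> qst M \<and> n mod 6 mod 3 \<noteq> 0} - qfst_acc M\<rparr>"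

lemma unitary_on_qfst_coin: "unitary_on {..<6} (qfst_coin M a q)"
proof (cases a)
  case LEnd
  have "(1 / sqrt 2)\<^sup>2 + (1 / sqrt 2)\<^sup>2 = (1::real)"
    by (simp add: power_divide)
  then show ?thesis
    using LEnd by (simp add: qfst_coin_def[abs_def] unitary_on_reflection)
next
  case (Sym b)
  have "sym_track M q ` {..<6} \<subseteq> {..<6}" "inj_on (sym_track M q) {..<6}"
    by (auto simp: lessThan_nat_numeral lessThan_Suc sym_track_def)
  then show ?thesis
    using Sym unitary_on_permute_rows[OF unitary_on_id_matrix] by (simp add: qfst_coin_def[abs_def])
next
  case REnd
  have "end_track M q ` {..<6} \<subseteq> {..<6}" "inj_on (end_track M q) {..<6}"
    by (auto simp: lessThan_nat_numeral lessThan_Suc end_track_def)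
  then show ?thesis
    using REnd unitary_on_permute_rows[OF unitary_on_id_matrix] by (simp add: qfst_coin_def[abs_def])
qed

lemma qfst_of_qfa_live_iff:
  assumes "qfa_wf M"
  shows "n \<in> st (qfst_of_qfa M) - (acc (qfst_of_qfa M) \<union> rej (qfst_of_qfa M)) \<longleftrightarrow>
           n div 6 \<in> qst M \<and> n mod 6 mod 3 = 0"
  using assms by (auto simp: qfst_of_qfa_def qfst_acc_def qfa_wf_def)

lemma qfst_of_qfa_wf:
  assumes wf: "qfa_wf M"
  shows "qfst_wf (qfst_of_qfa M)"
proof -
  have fin: "finite (qst M)"
    using wf by (simp add: qfa_wf_def)
  have "unitary_on (qst M) (qfst_state_matrix M a g)" for a g
    using wf by (simp add: qfst_state_matrix_def qfa_wf_def unitary_on_id_matrix)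
  then have U: "unitary_on (st (qfst_of_qfa M)) (V (qfst_of_qfa M) a)" for a
    using unitary_on_track_product[of 6 "qst M" "qfst_state_matrix M a" "qfst_coin M a", OF _ fin _ unitary_on_qfst_coin]
    by (simp add: qfst_of_qfa_def)
  have "end_track M q f mod 3 \<noteq> 0" if "f mod 3 = 0" for q f
    using that by (simp add: end_track_def)
  then have "end_track M q f \<noteq> g" if "f mod 3 = 0" "g mod 3 = 0" for q f g
    using that by metis
  then have "qfst_coin M REnd q f g = 0" if "f mod 3 = 0" "g mod 3 = 0" for q f g
    using that by (simp add: qfst_coin_def id_matrix_def)
  then have "V (qfst_of_qfa M) REnd n m = 0"
    if "n mod 6 mod 3 = 0" "m mod 6 mod 3 = 0" for n m
    using that by (simp add: qfst_of_qfa_def)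
  then show ?thesis
    using wf fin U unfolding qfst_wf_def qfst_of_qfa_live_iff[OF wf]
    by (auto simp: qfst_of_qfa_def finite_div_set qfa_wf_def qfst_acc_def)
qed

definition encodes_twice :: "'a qfa \<Rightarrow> complex \<Rightarrow> (nat \<Rightarrow> bit list \<Rightarrow> complex) \<Rightarrow> (nat \<Rightarrow> complex) \<Rightarrow> bool" where
  "encodes_twice M h \<psi>T \<phi> \<longleftrightarrow>
     (\<forall>q\<in>qst M. \<forall>f<6. \<forall>w. \<psi>T (6 * q + f) w = (if f mod 3 = 0 \<and> w = [] then h * \<phi> q else 0))"

lemma qfst_of_qfa_evolve:
  assumes wf: "qfa_wf M" and rel: "encodes_twice M h \<psi>T \<phi>" and g: "g < 6"
  shows "qfst_evolve (qfst_of_qfa M) a \<psi>T (6 * p + g) w =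
    (\<Sum>q\<in>qst M. \<Sum>f\<in>{0, 3}. if w = qfst_out M a (6 * q + f)
       then h * \<phi> q * (qfst_coin M a q f g * qfst_state_matrix M a g q p) else 0)"
proof -
  let ?T = "qfst_of_qfa M"
  have fin: "finite (qst M)"
    using wf by (simp add: qfa_wf_def)
  have rel': "\<psi>T (6 * q + f) y = (if f mod 3 = 0 \<and> y = [] then h * \<phi> q else 0)"
    if "q \<in> qst M" "f < 6" for q f y
    using rel that unfolding encodes_twice_def by blast
  have "\<psi>T n y = 0" if "n \<in> st ?T" "y \<noteq> []" for n y
    using rel'[of "n div 6" "n mod 6" y] that by (simp add: qfst_of_qfa_def)
  then have "qfst_evolve ?T a \<psi>T (6 * p + g) w =
      (\<Sum>n | n div 6 \<in> qst M. if w = qfst_out M a n then \<psi>T n [] * V ?T a n (6 * p + g) else 0)"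
    by (subst qfst_evolve_Nil_supported) (simp_all add: qfst_of_qfa_def)
  also have "\<dots> = (\<Sum>q\<in>qst M. \<Sum>f<6. if w = qfst_out M a (6 * q + f)
      then \<psi>T (6 * q + f) [] * V ?T a (6 * q + f) (6 * p + g) else 0)"
    using sum_div_set[of 6, OF _ fin] by simp
  also have "\<dots> = (\<Sum>q\<in>qst M. \<Sum>f<6. if f mod 3 = 0 then (if w = qfst_out M a (6 * q + f)
      then h * \<phi> q * (qfst_coin M a q f g * qfst_state_matrix M a g q p) else 0) else 0)"
    using g by (intro sum.cong refl) (simp add: rel' qfst_of_qfa_def)
  also have "\<dots> = (\<Sum>q\<in>qst M. \<Sum>f\<in>{0, 3}. if w = qfst_out M a (6 * q + f)
      then h * \<phi> q * (qfst_coin M a q f g * qfst_state_matrix M a g q p) else 0)"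
    by (rule sum.cong[OF refl]) (simp add: lessThan_nat_numeral lessThan_Suc)
  finally show ?thesis .
qed

lemma less_6_cases: "(g::nat) < 6 \<Longrightarrow> g \<in> {0, 1, 2, 3, 4, 5}"
  by auto

lemma qfst_of_qfa_evolve_cases:
  assumes wf: "qfa_wf M" and rel: "encodes_twice M h \<psi>T \<phi>" and g: "g < 6"
    and per_state: "\<And>q. (\<Sum>f\<in>{0, 3}. if w = qfst_out M a (6 * q + f)
       then h * \<phi> q * (qfst_coin M a q f g * qfst_state_matrix M a g q p) else 0) =
     (if C then h * (qfa_proj_non M \<phi> q * qV M a q p) else 0)
     + (if D \<and> q = p then (if q \<notin> qfa_live M then h * \<phi> q else 0) else 0)"
  shows "qfst_evolve (qfst_of_qfa M) a \<psi>T (6 * p + g) w =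
    (if C then h * qfa_evolve M a (qfa_proj_non M \<phi>) p else 0)
    + (if D \<and> p \<in> qst M - qfa_live M then h * \<phi> p else 0)"
proof -
  have "finite (qst M)"
    using wf by (simp add: qfa_wf_def)
  then show ?thesis
    unfolding qfst_of_qfa_evolve[OF wf rel g] per_state
    by (cases C; cases D) (simp_all add: sum.distrib qfa_evolve_def sum_distrib_left mult.assoc)
qed

lemma qfst_of_qfa_evolve_Sym:
  assumes wf: "qfa_wf M" and rel: "encodes_twice M h \<psi>T \<phi>" and g: "g < 6"
  shows "qfst_evolve (qfst_of_qfa M) (Sym b) \<psi>T (6 * p + g) w =
    (if g mod 3 = 0 \<and> w = [] then h * qfa_evolve M (Sym b) (qfa_proj_non M \<phi>) p else 0)
    + (if (g mod 3 = 1 \<and> w = [bit_of_nat (g div 3)]) \<and> p \<in> qst M - qfa_live M then h * \<phi> p else 0)"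
  using less_6_cases[OF g]
  by (intro qfst_of_qfa_evolve_cases[OF wf rel g], cases "q \<in> qfa_live M")
    (auto simp: qfst_coin_def qfst_state_matrix_def qfst_out_def sym_track_def id_matrix_def
      bit_of_nat_def qfa_proj_non_eq)

lemma qfst_of_qfa_evolve_REnd:
  assumes wf: "qfa_wf M" and rel: "encodes_twice M h \<psi>T \<phi>" and g: "g < 6"
  shows "qfst_evolve (qfst_of_qfa M) REnd \<psi>T (6 * p + g) w =
    (if g mod 3 = 1 \<and> w = [bit_of_nat (g div 3)] then h * qfa_evolve M REnd (qfa_proj_non M \<phi>) p else 0)
    + (if (g mod 3 = 2 \<and> w = [bit_of_nat (g div 3)]) \<and> p \<in> qst M - qfa_live M then h * \<phi> p else 0)"
  using less_6_cases[OF g]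
  by (intro qfst_of_qfa_evolve_cases[OF wf rel g], cases "q \<in> qfa_live M")
    (auto simp: qfst_coin_def qfst_state_matrix_def qfst_out_def end_track_def id_matrix_def
      bit_of_nat_def qfa_proj_non_eq)

lemma qfst_of_qfa_proj_non:
  assumes "qfa_wf M" "f < 6"
  shows "qfst_proj_non (qfst_of_qfa M) E (6 * q + f) w = (if q \<in> qst M \<and> f mod 3 = 0 then E (6 * q + f) w else 0)"
  unfolding qfst_proj_non_def qfst_of_qfa_live_iff[OF assms(1)] using assms(2) by simp

lemma encodes_twice_Sym:
  assumes wf: "qfa_wf M" and rel: "encodes_twice M h \<psi>T \<phi>"
  shows "encodes_twice M h (qfst_proj_non (qfst_of_qfa M) (qfst_evolve (qfst_of_qfa M) (Sym b) \<psi>T))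
           (qfa_evolve M (Sym b) (qfa_proj_non M \<phi>))"
  unfolding encodes_twice_def
  by (auto simp: qfst_of_qfa_proj_non[OF wf] qfst_of_qfa_evolve_Sym[OF wf rel])

lemma sum_qfst_acc:
  assumes wf: "qfa_wf M"
  shows "(\<Sum>n\<in>qfst_acc M. F n) =
           (\<Sum>q\<in>qacc M. F (6 * q + 1) + F (6 * q + 2)) + (\<Sum>q\<in>qrej M. F (6 * q + 4) + F (6 * q + 5))"
proof -
  have fin: "finite (qst M)" and A: "qacc M \<subseteq> qst M" and R: "qrej M \<subseteq> qst M"
    and D: "qacc M \<inter> qrej M = {}"
    using wf by (auto simp: qfa_wf_def)
  have "qfst_acc M \<subseteq> {n. n div 6 \<in> qst M}"
    using A R by (auto simp: qfst_acc_def)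
  then have "(\<Sum>n\<in>qfst_acc M. F n) = (\<Sum>q\<in>qst M. \<Sum>t<6. if 6 * q + t \<in> qfst_acc M then F (6 * q + t) else 0)"
    using sum_div_subset[of 6, OF _ fin] by simp
  also have "\<dots> = (\<Sum>q\<in>qst M. (if q \<in> qacc M then F (6 * q + 1) + F (6 * q + 2) else 0)
      + (if q \<in> qrej M then F (6 * q + 4) + F (6 * q + 5) else 0))"
    using D by (intro sum.cong refl) (auto simp: qfst_acc_def lessThan_nat_numeral lessThan_Suc add_ac)
  also have "\<dots> = (\<Sum>q\<in>qacc M. F (6 * q + 1) + F (6 * q + 2)) + (\<Sum>q\<in>qrej M. F (6 * q + 4) + F (6 * q + 5))"
    by (simp add: sum.distrib sum.inter_restrict[OF fin, symmetric] Int_absorb1 A R)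
  finally show ?thesis .
qed

lemma sum_qfst_acc_reports:
  assumes wf: "qfa_wf M"
    and "\<And>p. p \<in> qacc M \<Longrightarrow> F (6 * p + 1) + F (6 * p + 2) = (if w = [Zero] then X p else 0)"
    and "\<And>p. p \<in> qrej M \<Longrightarrow> F (6 * p + 4) + F (6 * p + 5) = (if w = [One] then X p else 0)"
  shows "(\<Sum>n\<in>qfst_acc M. F n) =
           (if w = [Zero] then \<Sum>p\<in>qacc M. X p else 0) + (if w = [One] then \<Sum>p\<in>qrej M. X p else 0)"
  using assms by (cases "w = [Zero]"; cases "w = [One]") (simp_all add: sum_qfst_acc)

lemma qfst_of_qfa_acc_Sym:
  assumes wf: "qfa_wf M" and rel: "encodes_twice M h \<psi>T \<phi>"
  shows "(\<Sum>n\<in>qfst_acc M. (cmod (qfst_evolve (qfst_of_qfa M) (Sym b) \<psi>T n w))\<^sup>2) =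
           (cmod h)\<^sup>2 * ((if w = [Zero] then \<Sum>p\<in>qacc M. (cmod (\<phi> p))\<^sup>2 else 0)
                        + (if w = [One] then \<Sum>p\<in>qrej M. (cmod (\<phi> p))\<^sup>2 else 0))"
proof -
  note E = qfst_of_qfa_evolve_Sym[OF wf rel, of _ b _ w]
  have "(\<Sum>n\<in>qfst_acc M. (cmod (qfst_evolve (qfst_of_qfa M) (Sym b) \<psi>T n w))\<^sup>2) =
      (if w = [Zero] then \<Sum>p\<in>qacc M. (cmod h)\<^sup>2 * (cmod (\<phi> p))\<^sup>2 else 0)
      + (if w = [One] then \<Sum>p\<in>qrej M. (cmod h)\<^sup>2 * (cmod (\<phi> p))\<^sup>2 else 0)"
    by (rule sum_qfst_acc_reports[OF wf])
      (use E[of 1] E[of 2] E[of 4] E[of 5] qfa_halting_not_live[OF wf] in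
        \<open>auto simp: bit_of_nat_def norm_mult power_mult_distrib\<close>)
  then show ?thesis
    by (simp add: sum_distrib_left distrib_left)
qed

lemma qfst_of_qfa_acc_REnd:
  assumes wf: "qfa_wf M" and rel: "encodes_twice M h \<psi>T \<phi>"
  defines "\<chi> \<equiv> qfa_evolve M REnd (qfa_proj_non M \<phi>)"
  shows "(\<Sum>n\<in>qfst_acc M. (cmod (qfst_evolve (qfst_of_qfa M) REnd \<psi>T n w))\<^sup>2) =
           (cmod h)\<^sup>2 * ((if w = [Zero] then \<Sum>p\<in>qacc M. (cmod (\<phi> p))\<^sup>2 + (cmod (\<chi> p))\<^sup>2 else 0)
                        + (if w = [One] then \<Sum>p\<in>qrej M. (cmod (\<phi> p))\<^sup>2 + (cmod (\<chi> p))\<^sup>2 else 0))"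
proof -
  note E = qfst_of_qfa_evolve_REnd[OF wf rel, of _ _ w, folded \<chi>_def]
  have "(\<Sum>n\<in>qfst_acc M. (cmod (qfst_evolve (qfst_of_qfa M) REnd \<psi>T n w))\<^sup>2) =
      (if w = [Zero] then \<Sum>p\<in>qacc M. (cmod h)\<^sup>2 * ((cmod (\<phi> p))\<^sup>2 + (cmod (\<chi> p))\<^sup>2) else 0)
      + (if w = [One] then \<Sum>p\<in>qrej M. (cmod h)\<^sup>2 * ((cmod (\<phi> p))\<^sup>2 + (cmod (\<chi> p))\<^sup>2) else 0)"
    by (rule sum_qfst_acc_reports[OF wf])
      (use E[of 1] E[of 2] E[of 4] E[of 5] qfa_halting_not_live[OF wf] in
        \<open>auto simp: bit_of_nat_def norm_mult power_mult_distrib algebra_simps\<close>)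
  then show ?thesis
    by (simp add: sum_distrib_left distrib_left)
qed

lemma qfst_of_qfa_acc_run:
  assumes wf: "qfa_wf M" and rel: "encodes_twice M h \<psi>T (qfa_evolve M a \<psi>)"
  shows "qfst_acc_run (qfst_of_qfa M) \<psi>T (map Sym bs @ [REnd]) w =
     (cmod h)\<^sup>2 * ((if w = [Zero] then qfa_halt_run M (qacc M) \<psi> (a # map Sym bs @ [REnd]) else 0)
                  + (if w = [One] then qfa_halt_run M (qrej M) \<psi> (a # map Sym bs @ [REnd]) else 0))"
  using rel
proof (induction bs arbitrary: \<psi>T a \<psi>)
  case Nil
  show ?case
    using qfst_of_qfa_acc_REnd[OF wf Nil, of w]
    by (cases "w = [Zero]"; cases "w = [One]")
      (simp_all add: qfst_of_qfa_def Let_def sum_distrib_left sum.distrib algebra_simps)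
next
  case (Cons b bs)
  show ?case
    using qfst_of_qfa_acc_Sym[OF wf Cons.prems, of b w] Cons.IH[OF encodes_twice_Sym[OF wf Cons.prems]]
    by (cases "w = [Zero]"; cases "w = [One]") (simp_all add: qfst_of_qfa_def Let_def algebra_simps)
qed

lemma qfst_of_qfa_prob:
  assumes wf: "qfa_wf M"
  shows "qfst_prob (qfst_of_qfa M) w v =
           (if w = [Zero] then qfa_prob M v / 2 else 0) + (if w = [One] then (1 - qfa_prob M v) / 2 else 0)"
proof -
  let ?T = "qfst_of_qfa M"
  let ?h = "complex_of_real (1 / sqrt 2)"
  have fin: "finite (qst M)" and q0: "qq0 M \<in> qst M"
    using wf by (auto simp: qfa_wf_def)
  define \<psi> where "\<psi> = (\<lambda>q. if q = qq0 M then (1::complex) else 0)"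
  define E where "E = qfst_evolve ?T LEnd (\<lambda>q x. if q = q0 ?T \<and> x = [] then 1 else 0)"
  have E: "E (6 * p + g) x = (if g mod 3 = 0 \<and> x = [] then ?h * qfa_evolve M LEnd \<psi> p else 0)"
    if "g < 6" for p g x
  proof -
    have "E (6 * p + g) x = (if x = [] then V ?T LEnd (6 * qq0 M) (6 * p + g) else 0)"
      unfolding E_def using fin q0
      by (subst qfst_evolve_point_mass) (simp_all add: qfst_of_qfa_def finite_div_set qfst_out_def)
    then show ?thesis
      using less_6_cases[OF that] fin q0
      by (auto simp: qfst_of_qfa_def qfst_coin_def reflection_def id_matrix_def qfst_state_matrix_def
          \<psi>_def qfa_evolve_point_mass)
  qed
  have h2: "(cmod ?h)\<^sup>2 = 1/2"
    by (simp add: norm_divide power_divide)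
  have rel: "encodes_twice M ?h (qfst_proj_non ?T E) (qfa_evolve M LEnd \<psi>)"
    unfolding encodes_twice_def using E by (auto simp: qfst_of_qfa_proj_non[OF wf])
  have "(\<Sum>n\<in>qfst_acc M. (cmod (E n w))\<^sup>2) = 0"
    using E[of 1] E[of 2] E[of 4] E[of 5] by (simp add: sum_qfst_acc[OF wf])
  then have "qfst_prob ?T w v = qfst_acc_run ?T (qfst_proj_non ?T E) (map Sym v @ [REnd]) w"
    by (simp add: qfst_prob_def tape_def E_def Let_def qfst_of_qfa_def)
  also have "\<dots> = ((if w = [Zero] then qfa_halt_run M (qacc M) \<psi> (tape v) else 0)
                  + (if w = [One] then qfa_halt_run M (qrej M) \<psi> (tape v) else 0)) / 2"
    unfolding qfst_of_qfa_acc_run[OF wf rel] h2 tape_def[symmetric] by simp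
  finally show ?thesis
    using qfa_reject_prob[OF wf, of v]
    by (simp add: qfa_prob_def qfa_acc_run_eq_halt_run \<psi>_def add_divide_distrib)
qed

lemma qfst_of_qfa_computes_isolated:
  assumes wf: "qfa_wf M" and bounded: "qfa_accepts_bounded M L"
  shows "computes_isolated (qfst_of_qfa M) (char_rel L)"
proof -
  obtain \<delta> :: real where "\<delta> > 0" and acc: "\<And>v. v \<in> L \<Longrightarrow> 1/2 + \<delta> \<le> qfa_prob M v"
    and rej: "\<And>v. v \<notin> L \<Longrightarrow> qfa_prob M v \<le> 1/2 - \<delta>"
    using bounded unfolding qfa_accepts_bounded_def by blast
  have "\<delta> \<le> 1/2"
    using qfa_prob_bounds[OF wf, of "[]"] acc[of "[]"] rej[of "[]"] by (cases "[] \<in> L") auto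
  show ?thesis
    unfolding computes_isolated_def
  proof (rule exI[of _ "1/4"], rule exI[of _ "\<delta>/2"], intro conjI allI impI)
    fix v w assume "(v, w) \<in> char_rel L"
    then show "1/4 + \<delta>/2 \<le> qfst_prob (qfst_of_qfa M) w v"
      using acc[of v] rej[of v] by (auto simp: char_rel_def qfst_of_qfa_prob[OF wf])
  next
    fix v w assume "(v, w) \<notin> char_rel L"
    then show "qfst_prob (qfst_of_qfa M) w v \<le> 1/4 - \<delta>/2"
      using acc[of v] rej[of v] \<open>\<delta> \<le> 1/2\<close> by (auto simp: char_rel_def qfst_of_qfa_prob[OF wf])
  qed (use \<open>\<delta> > 0\<close> in auto)
qed

section \<open>From a transducer to a QFA\<close>

definition track_word :: "nat \<Rightarrow> bit list" where
  "track_word t = (if t = 0 then [] else if t = 1 then [Zero] else [One])"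

(* On the tracks 0, 1, 2, which record the outputs of length at most 1, track_shift u appends u
   (track_shift_eq_iff); longer outputs go to the garbage tracks 3, 4, 5, and the remaining values
   only make track_shift u a permutation of the first six tracks. *)

definition track_shift :: "bit list \<Rightarrow> nat \<Rightarrow> nat" where
  "track_shift u t =
     (if 6 \<le> t \<or> u = [] then t
      else if u = [Zero] then [1, 4, 5, 0, 2, 3] ! t
      else if u = [One] then [2, 4, 5, 0, 1, 3] ! t
      else [3, 4, 5, 0, 1, 2] ! t)"

lemma less_3_cases: "(t::nat) < 3 \<Longrightarrow> t \<in> {0, 1, 2}"
  by auto

lemma track_shift_less_6: "t < 6 \<Longrightarrow> track_shift u t < 6"
  using less_6_cases[of t] by (auto simp: track_shift_def)

lemma track_shift_permutes: "track_shift u ` {..<7} \<subseteq> {..<7}" "inj_on (track_shift u) {..<7}"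
  by (auto simp: track_shift_def lessThan_nat_numeral lessThan_Suc)

lemma track_shift_eq_iff:
  assumes "t < 3" "s < 3"
  shows "track_shift u t = s \<longleftrightarrow> track_word s = track_word t @ u"
  using less_3_cases[OF assms(1)] less_3_cases[OF assms(2)]
  \<comment> \<open>the rule remdups_adj.cases splits u into [], [b] and longer lists\<close>
  by (cases u rule: remdups_adj.cases) (auto simp: track_shift_def track_word_def split: bit.splits)

lemma sum_track_shift:
  assumes "s < 3"
  shows "(\<Sum>t<3. \<phi> (track_word t) * id_matrix (track_shift u t) s) =
    (if length u \<le> length (track_word s) \<and> drop (length (track_word s) - length u) (track_word s) = u
     then \<phi> (take (length (track_word s) - length u) (track_word s)) else 0)"
  using less_3_cases[OF assms]
  by (cases u rule: remdups_adj.cases)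
    (auto simp: lessThan_nat_numeral lessThan_Suc track_word_def track_shift_def id_matrix_def split: bit.splits)

(* Track 6 is an extra tag: on the left end marker the reflection moves amplitude d from the track
   of the initial state to it, and it is accepting iff z. *)

definition qfa_coin :: "('a, bit) qfst \<Rightarrow> real \<Rightarrow> real \<Rightarrow> 'a tsym \<Rightarrow> nat \<Rightarrow> nat \<Rightarrow> nat \<Rightarrow> complex" where
  "qfa_coin T c d a q t =
     (if a = LEnd then reflection c d (track_shift (outf T LEnd (q0 T)) 0) 6 (track_shift (outf T a q) t)
      else id_matrix (track_shift (outf T a q) t))"

definition qfa_of_qfst_live :: "('a, bit) qfst \<Rightarrow> nat set" where
  "qfa_of_qfst_live T = {n. n div 7 \<in> st T - (acc T \<union> rej T) \<and> n mod 7 < 3}"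

definition qfa_of_qfst_acc :: "('a, bit) qfst \<Rightarrow> bool \<Rightarrow> nat set" where
  "qfa_of_qfst_acc T z = {n. n div 7 \<in> acc T \<and> n mod 7 = 1} \<union> {n. n div 7 \<in> st T \<and> n mod 7 = 6 \<and> z}"

definition qfa_of_qfst :: "('a, bit) qfst \<Rightarrow> real \<Rightarrow> real \<Rightarrow> bool \<Rightarrow> 'a qfa" where
  "qfa_of_qfst T c d z = \<lparr>qst = {n. n div 7 \<in> st T},
     qV = (\<lambda>a n m. qfa_coin T c d a (n div 7) (n mod 7) (m mod 7) * V T a (n div 7) (m div 7)),
     qq0 = 7 * q0 T,
     qacc = qfa_of_qfst_acc T z,
     qrej = {n. n div 7 \<in> st T} - qfa_of_qfst_live T - qfa_of_qfst_acc T z\<rparr>"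

lemma unitary_on_qfa_coin:
  assumes "c\<^sup>2 + d\<^sup>2 = 1"
  shows "unitary_on {..<7} (qfa_coin T c d a q)"
proof -
  have "track_shift (outf T LEnd (q0 T)) 0 < 6"
    by (simp add: track_shift_less_6)
  then have "unitary_on {..<7} (reflection c d (track_shift (outf T LEnd (q0 T)) 0) 6)"
    using assms by (intro unitary_on_reflection) auto
  then show ?thesis
    using unitary_on_permute_rows[OF _ track_shift_permutes] unitary_on_id_matrix[of "{..<7}"]
    by (cases "a = LEnd") (simp_all add: qfa_coin_def[abs_def])
qed

lemma qfa_of_qfst_wf:
  assumes wf: "qfst_wf T" and cd: "c\<^sup>2 + d\<^sup>2 = 1"
  shows "qfa_wf (qfa_of_qfst T c d z)"
proof -
  have fin: "finite (st T)"
    using wf by (simp add: qfst_wf_def)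
  have U: "unitary_on (qst (qfa_of_qfst T c d z)) (qV (qfa_of_qfst T c d z) a)" for a
    using unitary_on_track_product[of 7 "st T" "\<lambda>_. V T a" "qfa_coin T c d a", OF _ fin _ unitary_on_qfa_coin[OF cd]]
      wf by (simp add: qfst_wf_def qfa_of_qfst_def)
  have "qV (qfa_of_qfst T c d z) REnd n m = 0"
    if "n \<in> qfa_of_qfst_live T" "m \<in> qfa_of_qfst_live T" for n m
    using that wf by (simp add: qfst_wf_def qfa_of_qfst_live_def qfa_of_qfst_def)
  then show ?thesis
    using fin wf U unfolding qfa_wf_def
    by (auto simp: qfa_of_qfst_def finite_div_set qfst_wf_def qfa_of_qfst_acc_def qfa_of_qfst_live_def)
qed

definition encodes_outputs :: "('a, bit) qfst \<Rightarrow> complex \<Rightarrow> (nat \<Rightarrow> complex) \<Rightarrow> (nat \<Rightarrow> bit list \<Rightarrow> complex) \<Rightarrow> bool" where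
  "encodes_outputs T c \<psi>M \<psi>T \<longleftrightarrow>
     (\<forall>q\<in>st T. \<forall>t<7. \<psi>M (7 * q + t) = (if t < 3 then c * \<psi>T q (track_word t) else 0))"

lemma encodes_outputs_sum:
  assumes "encodes_outputs T c \<psi>M \<psi>T" "q \<in> st T"
  shows "(\<Sum>t<7. \<psi>M (7 * q + t) * X t) = c * (\<Sum>t<3. \<psi>T q (track_word t) * X t)"
proof -
  have "(\<Sum>t<7. \<psi>M (7 * q + t) * X t) = (\<Sum>t<3. \<psi>M (7 * q + t) * X t)"
    using assms by (intro sum.mono_neutral_right) (auto simp: encodes_outputs_def)
  then show ?thesis
    using assms by (simp add: encodes_outputs_def sum_distrib_left mult.assoc)
qed

lemma qfa_of_qfst_evolve:
  assumes fin: "finite (st T)" and a: "a \<noteq> LEnd" and rel: "encodes_outputs T c \<psi>M \<psi>T"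
  shows "s < 3 \<Longrightarrow> qfa_evolve (qfa_of_qfst T c' d z) a \<psi>M (7 * p + s) = c * qfst_evolve T a \<psi>T p (track_word s)"
    and "qfa_evolve (qfa_of_qfst T c' d z) a \<psi>M (7 * p + 6) = 0"
proof -
  have evolve: "qfa_evolve (qfa_of_qfst T c' d z) a \<psi>M (7 * p + s) =
      (\<Sum>q\<in>st T. c * (\<Sum>t<3. \<psi>T q (track_word t) * id_matrix (track_shift (outf T a q) t) s) * V T a q p)"
    if "s < 7" for s
    unfolding qfa_evolve_def using that a
    by (simp add: qfa_of_qfst_def qfa_coin_def sum_div_set[OF _ fin] mult.assoc encodes_outputs_sum[OF rel]
        sum_distrib_right flip: sum_distrib_left)
  show "qfa_evolve (qfa_of_qfst T c' d z) a \<psi>M (7 * p + s) = c * qfst_evolve T a \<psi>T p (track_word s)" if "s < 3"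
  proof -
    have "s < 7"
      using that by simp
    then show ?thesis
      unfolding evolve[OF \<open>s < 7\<close>] sum_track_shift[OF that] qfst_evolve_def sum_distrib_left
      by (intro sum.cong) auto
  qed
  have "id_matrix (track_shift u t) 6 = 0" if "t < 3" for u t
    using track_shift_less_6[of t u] that by (simp add: id_matrix_def)
  then show "qfa_evolve (qfa_of_qfst T c' d z) a \<psi>M (7 * p + 6) = 0"
    by (simp add: evolve)
qed

lemma sum_qfa_of_qfst_acc:
  assumes wf: "qfst_wf T"
  shows "(\<Sum>n\<in>qfa_of_qfst_acc T z. F n) = (\<Sum>q\<in>acc T. F (7 * q + 1)) + (if z then \<Sum>q\<in>st T. F (7 * q + 6) else 0)"
proof -
  have fin: "finite (st T)" and A: "acc T \<subseteq> st T"
    using wf by (auto simp: qfst_wf_def)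
  have "qfa_of_qfst_acc T z \<subseteq> {n. n div 7 \<in> st T}"
    using A by (auto simp: qfa_of_qfst_acc_def)
  then have "(\<Sum>n\<in>qfa_of_qfst_acc T z. F n) =
      (\<Sum>q\<in>st T. \<Sum>t<7. if 7 * q + t \<in> qfa_of_qfst_acc T z then F (7 * q + t) else 0)"
    using sum_div_subset[of 7, OF _ fin] by simp
  also have "\<dots> = (\<Sum>q\<in>st T. (if q \<in> acc T then F (7 * q + 1) else 0) + (if z then F (7 * q + 6) else 0))"
    by (intro sum.cong refl) (auto simp: qfa_of_qfst_acc_def lessThan_nat_numeral lessThan_Suc add_ac)
  also have "\<dots> = (\<Sum>q\<in>acc T. F (7 * q + 1)) + (if z then \<Sum>q\<in>st T. F (7 * q + 6) else 0)"
    by (simp add: sum.distrib sum.inter_restrict[OF fin, symmetric] Int_absorb1 A)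
  finally show ?thesis .
qed

lemma qfa_of_qfst_proj_non:
  assumes "qfst_wf T" "t < 7"
  shows "qfa_proj_non (qfa_of_qfst T c d z) \<phi> (7 * q + t) =
           (if q \<in> st T - (acc T \<union> rej T) \<and> t < 3 then \<phi> (7 * q + t) else 0)"
  using assms by (auto simp: qfa_proj_non_def qfa_of_qfst_def qfa_of_qfst_live_def qfa_of_qfst_acc_def qfst_wf_def)

lemma encodes_outputs_proj_non:
  assumes wf: "qfst_wf T"
    and tracks: "\<And>q s. q \<in> st T \<Longrightarrow> s < 3 \<Longrightarrow> \<phi>M (7 * q + s) = c * \<phi>T q (track_word s)"
  shows "encodes_outputs T c (qfa_proj_non (qfa_of_qfst T c' d z) \<phi>M) (qfst_proj_non T \<phi>T)"
  using wf tracks unfolding encodes_outputs_def by (auto simp: qfa_of_qfst_proj_non qfst_proj_non_def)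

lemma qfa_of_qfst_acc_run:
  assumes wf: "qfst_wf T" and "LEnd \<notin> set as" and "encodes_outputs T c \<psi>M \<psi>T"
  shows "qfa_acc_run (qfa_of_qfst T c' d z) \<psi>M as = (cmod c)\<^sup>2 * qfst_acc_run T \<psi>T as [Zero]"
  using assms(2,3)
proof (induction as arbitrary: \<psi>M \<psi>T)
  case Nil
  then show ?case
    by simp
next
  case (Cons a as)
  let ?M = "qfa_of_qfst T c' d z"
  have fin: "finite (st T)"
    using wf by (simp add: qfst_wf_def)
  have a: "a \<noteq> LEnd"
    using Cons.prems(1) by auto
  define \<phi>M where "\<phi>M = qfa_evolve ?M a \<psi>M"
  define \<phi>T where "\<phi>T = qfst_evolve T a \<psi>T"
  have tracks: "\<phi>M (7 * p + s) = c * \<phi>T p (track_word s)" if "s < 3" for p s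
    unfolding \<phi>M_def \<phi>T_def using qfa_of_qfst_evolve(1)[OF fin a Cons.prems(2) that] .
  have tag: "\<phi>M (7 * p + 6) = 0" for p
    unfolding \<phi>M_def using qfa_of_qfst_evolve(2)[OF fin a Cons.prems(2)] .
  have "(\<Sum>n\<in>qacc ?M. (cmod (\<phi>M n))\<^sup>2) = (cmod c)\<^sup>2 * (\<Sum>p\<in>acc T. (cmod (\<phi>T p [Zero]))\<^sup>2)"
    using tracks[of 1] tag
    by (simp add: qfa_of_qfst_def sum_qfa_of_qfst_acc[OF wf] track_word_def norm_mult power_mult_distrib
        sum_distrib_left)
  moreover note Cons.IH[OF _ encodes_outputs_proj_non[where \<phi>M = \<phi>M and \<phi>T = \<phi>T, OF wf tracks]]
  ultimately show ?case
    using Cons.prems(1) by (simp add: \<phi>M_def \<phi>T_def Let_def algebra_simps)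
qed

lemma qfa_of_qfst_left_end:
  fixes c d :: real and z :: bool and \<phi>M :: "nat \<Rightarrow> complex" and \<phi>T :: "nat \<Rightarrow> bit list \<Rightarrow> complex"
  assumes wf: "qfst_wf T"
  defines "\<phi>M \<equiv> qfa_evolve (qfa_of_qfst T c d z) LEnd (\<lambda>n. if n = 7 * q0 T then 1 else 0)"
    and "\<phi>T \<equiv> qfst_evolve T LEnd (\<lambda>q x. if q = q0 T \<and> x = [] then 1 else 0)"
  shows "s < 3 \<Longrightarrow> \<phi>M (7 * p + s) = c * \<phi>T p (track_word s)"
    and "\<phi>M (7 * p + 6) = d * V T LEnd (q0 T) p"
proof -
  have fin: "finite (st T)" and q0: "q0 T \<in> st T"
    using wf by (auto simp: qfst_wf_def)
  let ?u = "outf T LEnd (q0 T)"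
  have \<phi>M: "\<phi>M (7 * p + s) = reflection c d (track_shift ?u 0) 6 (track_shift ?u 0) s * V T LEnd (q0 T) p"
    if "s < 7" for s
    unfolding \<phi>M_def using that fin q0
    by (simp add: qfa_evolve_point_mass qfa_of_qfst_def finite_div_set qfa_coin_def)
  have \<phi>T: "\<phi>T p x = (if x = ?u then V T LEnd (q0 T) p else 0)" for x
    unfolding \<phi>T_def using fin q0 by (rule qfst_evolve_point_mass)
  have "track_shift ?u 0 < 6"
    by (rule track_shift_less_6) simp
  then show "\<phi>M (7 * p + s) = c * \<phi>T p (track_word s)" if "s < 3"
    using \<phi>M[of s] \<phi>T track_shift_eq_iff[of 0 s ?u] that by (auto simp: reflection_def track_word_def)
  show "\<phi>M (7 * p + 6) = d * V T LEnd (q0 T) p"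
    using \<phi>M[of 6] \<open>track_shift ?u 0 < 6\<close> by (simp add: reflection_def)
qed

lemma qfa_of_qfst_prob:
  assumes wf: "qfst_wf T" and cd: "c\<^sup>2 + d\<^sup>2 = 1"
  shows "qfa_prob (qfa_of_qfst T c d z) v = c\<^sup>2 * qfst_prob T [Zero] v + (if z then d\<^sup>2 else 0)"
proof -
  have q0: "q0 T \<in> st T" and U: "unitary_on (st T) (V T LEnd)"
    using wf by (auto simp: qfst_wf_def)
  let ?M = "qfa_of_qfst T c d z"
  define \<phi>M where "\<phi>M = qfa_evolve ?M LEnd (\<lambda>n. if n = 7 * q0 T then 1 else 0)"
  define \<phi>T where "\<phi>T = qfst_evolve T LEnd (\<lambda>q x. if q = q0 T \<and> x = [] then 1 else 0)"
  note tracks = qfa_of_qfst_left_end(1)[OF wf, where c = c and d = d and z = z, folded \<phi>M_def \<phi>T_def]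
  have "(\<Sum>p\<in>st T. (cmod (\<phi>M (7 * p + 6)))\<^sup>2) = d\<^sup>2"
    using unitary_on_row_norm[OF U q0] qfa_of_qfst_left_end(2)[OF wf, where c = c and d = d and z = z, folded \<phi>M_def]
    by (simp add: norm_mult power_mult_distrib flip: sum_distrib_left)
  then have acc: "(\<Sum>n\<in>qacc ?M. (cmod (\<phi>M n))\<^sup>2) =
      c\<^sup>2 * (\<Sum>p\<in>acc T. (cmod (\<phi>T p [Zero]))\<^sup>2) + (if z then d\<^sup>2 else 0)"
    using tracks[of 1]
    by (simp add: qfa_of_qfst_def sum_qfa_of_qfst_acc[OF wf] track_word_def norm_mult power_mult_distrib
        sum_distrib_left)
  have run: "qfa_acc_run ?M (qfa_proj_non ?M \<phi>M) (map Sym v @ [REnd]) =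
      c\<^sup>2 * qfst_acc_run T (qfst_proj_non T \<phi>T) (map Sym v @ [REnd]) [Zero]"
    using qfa_of_qfst_acc_run[OF wf _ encodes_outputs_proj_non[where \<phi>M = \<phi>M and \<phi>T = \<phi>T
        and c' = c and d = d and z = z, OF wf tracks], of "map Sym v @ [REnd]" c d z]
    by (simp add: image_iff)
  show ?thesis
    using acc run
    by (simp add: qfa_prob_def qfst_prob_def tape_def \<phi>M_def \<phi>T_def Let_def algebra_simps qfa_of_qfst_def)
qed

(* k is the c^2 of qfa_of_qfst_prob; for alpha <= 1/2 the scaled cutpoint k alpha is lifted to
   1/2 by the accepting tag track, which contributes 1 - k. *)

lemma rescale_cutpoint_to_half:
  fixes \<alpha> :: real
  assumes \<alpha>: "0 < \<alpha>" "\<alpha> < 1"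
  obtains k z where "0 < k" "k \<le> 1" "k * \<alpha> + (if z then 1 - k else 0) = 1/2"
proof (cases "\<alpha> \<le> 1/2")
  case True
  define k where "k = 1 / (2 * (1 - \<alpha>))"
  have "0 < k" "k \<le> 1" "k * (1 - \<alpha>) = 1/2"
    using \<alpha> True by (simp_all add: k_def field_simps)
  moreover have "k * \<alpha> + (1 - k) = 1 - k * (1 - \<alpha>)"
    by (simp add: algebra_simps)
  ultimately show ?thesis
    using that[of k True] by simp
next
  case False
  then show ?thesis
    using \<alpha> that[of "1 / (2 * \<alpha>)" False] by (simp add: field_simps)
qed

lemma qfa_of_qfst_accepts_bounded:
  assumes wf: "qfst_wf T" and iso: "computes_isolated T (char_rel L)"
  shows "\<exists>c d z. c\<^sup>2 + d\<^sup>2 = 1 \<and> qfa_accepts_bounded (qfa_of_qfst T c d z) L"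
proof -
  obtain \<alpha> \<epsilon> :: real where \<alpha>: "0 < \<alpha>" "\<alpha> < 1" and "\<epsilon> > 0"
    and inR: "\<And>v w. (v, w) \<in> char_rel L \<Longrightarrow> \<alpha> + \<epsilon> \<le> qfst_prob T w v"
    and notR: "\<And>v w. (v, w) \<notin> char_rel L \<Longrightarrow> qfst_prob T w v \<le> \<alpha> - \<epsilon>"
    using iso unfolding computes_isolated_def by blast
  obtain k z where k: "0 < k" "k \<le> 1" and cut: "k * \<alpha> + (if z then 1 - k else 0) = 1/2"
    using rescale_cutpoint_to_half[OF \<alpha>] by blast
  define c d where "c = sqrt k" and "d = sqrt (1 - k)"
  have cd: "c\<^sup>2 + d\<^sup>2 = 1"
    using k by (simp add: c_def d_def)
  have P: "qfa_prob (qfa_of_qfst T c d z) v = k * qfst_prob T [Zero] v + (if z then 1 - k else 0)" for v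
    using qfa_of_qfst_prob[OF wf cd] k by (simp add: c_def d_def)
  have "qfa_accepts_bounded (qfa_of_qfst T c d z) L"
    unfolding qfa_accepts_bounded_def
  proof (intro exI[of _ "k * \<epsilon>"] conjI allI impI)
    fix v assume "v \<in> L"
    then have "k * (\<alpha> + \<epsilon>) \<le> k * qfst_prob T [Zero] v"
      using inR[of v "[Zero]"] k by (simp add: char_rel_def)
    then show "1/2 + k * \<epsilon> \<le> qfa_prob (qfa_of_qfst T c d z) v"
      using P[of v] cut by (simp add: algebra_simps)
  next
    fix v assume "v \<notin> L"
    then have "k * qfst_prob T [Zero] v \<le> k * (\<alpha> - \<epsilon>)"
      using notR[of v "[Zero]"] k by (simp add: char_rel_def)
    then show "qfa_prob (qfa_of_qfst T c d z) v \<le> 1/2 - k * \<epsilon>"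
      using P[of v] cut by (simp add: algebra_simps)
  qed (use k \<open>\<epsilon> > 0\<close> in simp)
  with cd show ?thesis
    by blast
qed

theorem theorem1:
  fixes L :: "'a::finite list set"
  shows "(\<exists>M :: 'a qfa. qfa_wf M \<and> qfa_accepts_bounded M L) \<longleftrightarrow>
         (\<exists>T :: ('a, bit) qfst. qfst_wf T \<and> computes_isolated T (char_rel L))"
proof
  assume "\<exists>M :: 'a qfa. qfa_wf M \<and> qfa_accepts_bounded M L"
  then show "\<exists>T :: ('a, bit) qfst. qfst_wf T \<and> computes_isolated T (char_rel L)"
    using qfst_of_qfa_wf qfst_of_qfa_computes_isolated by blast
next
  assume "\<exists>T :: ('a, bit) qfst. qfst_wf T \<and> computes_isolated T (char_rel L)"
  then show "\<exists>M :: 'a qfa. qfa_wf M \<and> qfa_accepts_bounded M L"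
    using qfa_of_qfst_wf qfa_of_qfst_accepts_bounded by metis
qed

end
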